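(* For the monomial symmetric polynomials $m_\mu=m_\mu(L_1,L_2,L_3,L_4)$ in $\mathbb Z S_4$: (1) for $i\ge 7$, $m_i=14m_{i-2}-49m_{i-4}+36m_{i-6}$; (2) for $i\ge 6$, $m_{i,i}=8m_{i-1,i-1}-5m_{i-2,i-2}-50m_{i-3,i-3}+36m_{i-4,i-4}+72m_{i-5,i-5}$; (3) for $i\ge 5$, $m_{i,i,i}=40m_{i-2,i-2,i-2}-144m_{i-4,i-4,i-4}$.
   Context: $S_4$ is the symmetric group on $\{1,2,3,4\}$, $\mathbb Z S_4$ its integral group ring. The Jucys–Murphy elements are $L_1=0$ and $L_i=\sum_{k=1}^{i-1}(k\ i)$ for $i=2,3,4$; they pairwise commute. For a partition $\mu=(\mu_1,\dots,\mu_r)$, $m_\mu(x_1,\dots,x_4)$ is the monomial symmetric polynomial: the sum of all distinct monomials $x_1^{\alpha_1}\cdots x_4^{\alpha_4}$ with $(\alpha_1,\dots,\alpha_4)$ a rearrangement of $(\mu_1,\dots,\mu_r,0,\dots,0)$ ($m_\mu=0$ if $r>4$, and $m_\emptyset=1$). We write $m_\mu$ for $m_\mu(L_1,L_2,L_3,L_4)$ and omit parentheses in subscripts, e.g. $m_{i,i}=m_{(i,i)}$. *)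

theory Defs
  imports "HOL-Combinatorics.Combinatorics"
begin

text \<open>The integral group ring Z S4 is represented by functions from permutations to int,
  supported on S4 (coefficient of each group element).\<close>

definition S4 :: "(nat \<Rightarrow> nat) set" where
  "S4 = {p. p permutes {1..4::nat}}"

type_synonym zs4 = "(nat \<Rightarrow> nat) \<Rightarrow> int"

definition gbasis :: "(nat \<Rightarrow> nat) \<Rightarrow> zs4" where
  "gbasis p = (\<lambda>s. if s = p then 1 else 0)"

definition gone :: zs4 where
  "gone = gbasis id"

text \<open>Convolution product: gbasis a * gbasis b = gbasis (a o b).\<close>
definition gmul :: "zs4 \<Rightarrow> zs4 \<Rightarrow> zs4" where
  "gmul f g = (\<lambda>s. if s \<in> S4 then (\<Sum>t\<in>S4. f t * g (inv t \<circ> s)) else 0)"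

primrec gpow :: "zs4 \<Rightarrow> nat \<Rightarrow> zs4" where
  "gpow f 0 = gone"
| "gpow f (Suc n) = gmul f (gpow f n)"

text \<open>Jucys--Murphy elements L_i = sum_{k=1}^{i-1} (k i); L_1 = 0.\<close>
definition JM :: "nat \<Rightarrow> zs4" where
  "JM i = (\<lambda>s. \<Sum>k\<in>{1..<i}. gbasis (transpose k i) s)"

text \<open>The monomial L_1^(a!0) L_2^(a!1) L_3^(a!2) L_4^(a!3) for an exponent list a of length 4.\<close>
definition JMmono :: "nat list \<Rightarrow> zs4" where
  "JMmono a = foldr (\<lambda>j acc. gmul (gpow (JM (j + 1)) (a ! j)) acc) [0..<4] gone"

text \<open>Monomial symmetric polynomial m_mu(L_1,...,L_4), mu given as a list of parts:
  sum over all distinct exponent vectors which are rearrangements of mu padded by zeros;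
  zero if mu has more than 4 parts.\<close>
definition msym :: "nat list \<Rightarrow> zs4" where
  "msym mu = (if length mu > 4 then (\<lambda>_. 0) else
     (\<lambda>s. \<Sum>a\<in>{a. length a = 4 \<and> mset a = mset (mu @ replicate (4 - length mu) 0)}. JMmono a s))"

end

theory Submission
  imports Defs
begin

text \<open>
  The Jucys--Murphy elements L_1, ..., L_4 pairwise commute, so a monomial symmetric polynomial
  whose nonzero parts are all equal is a power sum:
  m_(i) = sum_j L_j^i, m_(i,i) = sum_{a<b} (L_a L_b)^i and m_(i,i,i) = sum_{a<b<c} (L_a L_b L_c)^i
  for i > 0.  Each of the three recurrences therefore follows once every summand C satisfies one
  fixed linear recurrence C^(d+1) = sum_l c_l C^(l+1) (an annihilating polynomial of C): left
  multiplication by C shifts it to all higher powers, and it survives summation.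
\<close>

lemma S4_finite: "finite S4"
  unfolding S4_def by (simp add: finite_permutations)

lemma S4_permutes: "s \<in> S4 \<Longrightarrow> s permutes {1..4}"
  unfolding S4_def by simp

lemma S4_id: "id \<in> S4"
  unfolding S4_def by (simp add: permutes_id)

lemma S4_inv: "s \<in> S4 \<Longrightarrow> inv s \<in> S4"
  unfolding S4_def by (simp add: permutes_inv)

lemma S4_comp: "s \<in> S4 \<Longrightarrow> t \<in> S4 \<Longrightarrow> s \<circ> t \<in> S4"
  unfolding S4_def by (simp add: permutes_compose)

definition supported :: "zs4 \<Rightarrow> bool" where
  "supported f \<longleftrightarrow> (\<forall>s. s \<notin> S4 \<longrightarrow> f s = 0)"

lemma supported_gmul [simp]: "supported (gmul f g)"
  unfolding supported_def gmul_def by simp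

lemma supported_gone [simp]: "supported gone"
  unfolding supported_def gone_def gbasis_def using S4_id by auto

lemma supported_gpow [simp]: "supported (gpow f n)"
  by (cases n) auto

lemma gmul_gone_left: "supported g \<Longrightarrow> gmul gone g = g"
proof
  fix s assume g: "supported g"
  show "gmul gone g s = g s"
  proof (cases "s \<in> S4")
    case True
    have "(\<Sum>t\<in>S4. gone t * g (inv t \<circ> s)) = (\<Sum>t\<in>S4. if t = id then g s else 0)"
      by (rule sum.cong) (auto simp: gone_def gbasis_def)
    then show ?thesis using True S4_id S4_finite by (simp add: gmul_def)
  qed (use g in \<open>simp add: gmul_def supported_def\<close>)
qed

lemma permutes_inv_comp_eq_id:
  assumes "t permutes A" shows "inv t \<circ> s = id \<longleftrightarrow> s = t"
proof
  assume "inv t \<circ> s = id"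
  then have "t \<circ> (inv t \<circ> s) = t" by simp
  then show "s = t" using assms by (simp add: o_assoc permutes_inv_o)
qed (use assms in \<open>simp add: permutes_inv_o\<close>)

lemma gmul_gone_right: "supported f \<Longrightarrow> gmul f gone = f"
proof
  fix s assume f: "supported f"
  show "gmul f gone s = f s"
  proof (cases "s \<in> S4")
    case True
    have "gone (inv t \<circ> s) = (if t = s then 1 else 0)" if "t \<in> S4" for t
      using permutes_inv_comp_eq_id[OF S4_permutes[OF that]] by (auto simp: gone_def gbasis_def)
    then have "(\<Sum>t\<in>S4. f t * gone (inv t \<circ> s)) = (\<Sum>t\<in>S4. if t = s then f t else 0)"
      by (intro sum.cong) auto
    then show ?thesis using True S4_finite by (simp add: gmul_def)
  qed (use f in \<open>simp add: gmul_def supported_def\<close>)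
qed

text \<open>Left translation by an element of S4 permutes S4; this reindexing drives associativity.\<close>

lemma S4_sum_left_translate:
  assumes "u \<in> S4" shows "(\<Sum>t\<in>S4. F t) = (\<Sum>v\<in>S4. F (u \<circ> v))"
proof -
  have u: "u permutes {1..4}" using S4_permutes[OF assms] .
  show ?thesis
  proof (rule sum.reindex_bij_witness[where i = "\<lambda>v. u \<circ> v" and j = "\<lambda>t. inv u \<circ> t"])
    fix t assume t: "t \<in> S4"
    show "u \<circ> (inv u \<circ> t) = t" using u by (simp add: o_assoc permutes_inv_o)
    then show "F (u \<circ> (inv u \<circ> t)) = F t" by simp
    show "inv u \<circ> t \<in> S4" using t by (simp add: S4_comp S4_inv assms)
  next
    fix v assume v: "v \<in> S4"
    show "inv u \<circ> (u \<circ> v) = v" using u by (simp add: o_assoc permutes_inv_o)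
    show "u \<circ> v \<in> S4" using v by (simp add: S4_comp assms)
  qed
qed

lemma S4_inv_comp: "u \<in> S4 \<Longrightarrow> v \<in> S4 \<Longrightarrow> inv (u \<circ> v) = inv v \<circ> inv u"
  using S4_permutes[THEN permutes_bij] by (simp add: o_inv_distrib)

lemma gmul_assoc: "gmul (gmul f g) h = gmul f (gmul g h)"
proof
  fix s show "gmul (gmul f g) h s = gmul f (gmul g h) s"
  proof (cases "s \<in> S4")
    case True
    have inner: "(\<Sum>t\<in>S4. g (inv u \<circ> t) * h (inv t \<circ> s))
        = (\<Sum>v\<in>S4. g v * h (inv v \<circ> (inv u \<circ> s)))" if u: "u \<in> S4" for u
    proof -
      have "inv u \<circ> (u \<circ> v) = v" "inv (u \<circ> v) \<circ> s = inv v \<circ> (inv u \<circ> s)" if "v \<in> S4" for v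
        using S4_permutes[OF u] S4_inv_comp[OF u that] by (simp_all add: o_assoc permutes_inv_o)
      then show ?thesis
        by (subst S4_sum_left_translate[OF u]) (intro sum.cong; simp)
    qed
    have "gmul (gmul f g) h s = (\<Sum>t\<in>S4. \<Sum>u\<in>S4. f u * (g (inv u \<circ> t) * h (inv t \<circ> s)))"
      using True by (simp add: gmul_def sum_distrib_right mult.assoc)
    also have "\<dots> = (\<Sum>u\<in>S4. \<Sum>t\<in>S4. f u * (g (inv u \<circ> t) * h (inv t \<circ> s)))"
      by (rule sum.swap)
    also have "\<dots> = (\<Sum>u\<in>S4. f u * (\<Sum>v\<in>S4. g v * h (inv v \<circ> (inv u \<circ> s))))"
      by (rule sum.cong) (simp_all add: sum_distrib_left[symmetric] inner)
    also have "\<dots> = gmul f (gmul g h) s"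
      using True by (simp add: gmul_def S4_comp S4_inv)
    finally show ?thesis .
  qed (simp add: gmul_def)
qed

lemma gmul_sum_right: "gmul f (\<lambda>s. \<Sum>l\<in>L. c l * g l s) = (\<lambda>s. \<Sum>l\<in>L. c l * gmul f (g l) s)"
proof
  fix s show "gmul f (\<lambda>s. \<Sum>l\<in>L. c l * g l s) s = (\<Sum>l\<in>L. c l * gmul f (g l) s)"
    by (auto simp: gmul_def sum_distrib_left sum_distrib_right mult.assoc mult.left_commute intro: sum.swap)
qed

lemma gmul_commute_gpow:
  assumes "gmul A B = gmul B A" "supported B"
  shows "gmul (gpow A n) B = gmul B (gpow A n)"
proof (induction n)
  case 0 then show ?case using assms(2) by (simp add: gmul_gone_left gmul_gone_right)
next
  case (Suc n)
  have "gmul (gpow A (Suc n)) B = gmul A (gmul (gpow A n) B)" by (simp add: gmul_assoc)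
  also have "\<dots> = gmul (gmul A B) (gpow A n)" by (simp add: Suc gmul_assoc)
  also have "\<dots> = gmul B (gpow A (Suc n))" by (simp add: assms(1) gmul_assoc)
  finally show ?case .
qed

lemma gpow_gmul_commuting:
  assumes "gmul A B = gmul B A" "supported B"
  shows "gmul (gpow A n) (gpow B n) = gpow (gmul A B) n"
proof (induction n)
  case 0 then show ?case by (simp add: gmul_gone_left)
next
  case (Suc n)
  have "gmul (gpow A (Suc n)) (gpow B (Suc n)) = gmul A (gmul (gmul (gpow A n) B) (gpow B n))"
    by (simp add: gmul_assoc)
  also have "\<dots> = gmul (gmul A B) (gmul (gpow A n) (gpow B n))"
    by (simp add: gmul_commute_gpow[OF assms] gmul_assoc)
  finally show ?case using Suc by simp
qed

lemma gmul_commute_gmul: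
  assumes "gmul A B = gmul B A" "gmul A C = gmul C A"
  shows "gmul A (gmul B C) = gmul (gmul B C) A"
proof -
  have "gmul A (gmul B C) = gmul (gmul A B) C" by (rule gmul_assoc[symmetric])
  also have "\<dots> = gmul B (gmul A C)" unfolding assms(1) by (rule gmul_assoc)
  also have "\<dots> = gmul (gmul B C) A" unfolding assms(2) by (rule gmul_assoc[symmetric])
  finally show ?thesis .
qed

lemma gpow_recurrence_shift:
  assumes "gpow C (d+1) = (\<lambda>s. \<Sum>l<d. c l * gpow C (l+1) s)"
  shows "gpow C (d+m+1) = (\<lambda>s. \<Sum>l<d. c l * gpow C (l+m+1) s)"
proof (induction m)
  case 0 then show ?case using assms by simp
next
  case (Suc m)
  have "gpow C (d + Suc m + 1) = gmul C (gpow C (d+m+1))" by simp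
  also have "\<dots> = (\<lambda>s. \<Sum>l<d. c l * gmul C (gpow C (l+m+1)) s)" by (simp only: Suc gmul_sum_right)
  finally show ?case by simp
qed

definition S4_lists :: "nat list list" where
  "S4_lists = [[1, 2, 3, 4], [1, 2, 4, 3], [1, 3, 2, 4], [1, 3, 4, 2], [1, 4, 2, 3], [1, 4, 3, 2], [2, 1, 3, 4], [2, 1, 4, 3], [2, 3, 1, 4], [2, 3, 4, 1], [2, 4, 1, 3], [2, 4, 3, 1], [3, 1, 2, 4], [3, 1, 4, 2], [3, 2, 1, 4], [3, 2, 4, 1], [3, 4, 1, 2], [3, 4, 2, 1], [4, 1, 2, 3], [4, 1, 3, 2], [4, 2, 1, 3], [4, 2, 3, 1], [4, 3, 1, 2], [4, 3, 2, 1]]"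

definition list_perm :: "nat list \<Rightarrow> nat \<Rightarrow> nat" where
  "list_perm xs n = (if n \<in> {1..4} then xs ! (n - 1) else n)"

definition S4_elt :: "nat \<Rightarrow> nat \<Rightarrow> nat" where
  "S4_elt i = list_perm (S4_lists ! i)"

text \<open>Composition in one-line notation, and the table of quotients: quot_table ! k ! i is the
  index j with p_i o p_j = p_k, where p_i = S4_elt i.  Both tables are validated below.\<close>

definition list_comp :: "nat list \<Rightarrow> nat list \<Rightarrow> nat list" where
  "list_comp a b = map (\<lambda>j. a ! (j - 1)) b"

definition quot_table :: "nat list list" where
  "quot_table = [[0, 1, 2, 4, 3, 5, 6, 7, 12, 18, 13, 19, 8, 10, 14, 20, 16, 22, 9, 11, 15, 21, 17, 23], [1, 0, 3, 5, 2, 4, 7, 6, 13, 19, 12, 18, 9, 11, 15, 21, 17, 23, 8, 10, 14, 20, 16, 22], [2, 4, 0, 1, 5, 3, 8, 10, 14, 20, 16, 22, 6, 7, 12, 18, 13, 19, 11, 9, 17, 23, 15, 21], [3, 5, 1, 0, 4, 2, 9, 11, 15, 21, 17, 23, 7, 6, 13, 19, 12, 18, 10, 8, 16, 22, 14, 20], [4, 2, 5, 3, 0, 1, 10, 8, 16, 22, 14, 20, 11, 9, 17, 23, 15, 21, 6, 7, 12, 18, 13, 19], [5, 3, 4, 2, 1, 0, 11, 9, 17, 23, 15, 21, 10, 8, 16, 22, 14, 20, 7, 6, 13, 19, 12, 18], [6, 7, 12, 18, 13, 19, 0, 1, 2, 4, 3, 5, 14, 20, 8, 10, 22, 16, 15,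 21, 9, 11, 23, 17], [7, 6, 13, 19, 12, 18, 1, 0, 3, 5, 2, 4, 15, 21, 9, 11, 23, 17, 14, 20, 8, 10, 22, 16], [8, 10, 14, 20, 16, 22, 2, 4, 0, 1, 5, 3, 12, 18, 6, 7, 19, 13, 17, 23, 11, 9, 21, 15], [9, 11, 15, 21, 17, 23, 3, 5, 1, 0, 4, 2, 13, 19, 7, 6, 18, 12, 16, 22, 10, 8, 20, 14], [10, 8, 16, 22, 14, 20, 4, 2, 5, 3, 0, 1, 17, 23, 11, 9, 21, 15, 12, 18, 6, 7, 19, 13], [11, 9, 17, 23, 15, 21, 5, 3, 4, 2, 1, 0, 16, 22, 10, 8, 20, 14, 13, 19, 7, 6, 18, 12], [12, 18, 6, 7, 19, 13, 14, 20, 8, 10, 22, 16, 0, 1, 2, 4, 3, 5, 21, 15, 23, 17, 9, 11], [13, 19, 7, 6, 18, 12, 15, 21, 9, 11, 23, 17, 1, 0, 3, 5, 2, 4, 20, 14, 22, 16, 8, 10], [14, 20, 8, 10, 22, 16, 12, 18, 6, 7, 19, 13, 2, 4, 0, 1, 5, 3, 23, 17, 21, 15, 11, 9], [15, 21, 9, 11, 23, 17, 13, 19, 7, 6, 18, 12, 3, 5, 1, 0, 4, 2, 22, 16, 20, 14, 10, 8], [16, 22, 10, 8, 20, 14, 17, 23, 11, 9, 21, 15, 4, 2, 5, 3, 0, 1, 18, 12, 19, 13, 6, 7], [17, 23, 11, 9, 21, 15, 16, 22, 10, 8, 20, 14, 5, 3, 4, 2, 1, 0, 19, 13, 18, 12,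 7, 6], [18, 12, 19, 13, 6, 7, 20, 14, 22, 16, 8, 10, 21, 15, 23, 17, 9, 11, 0, 1, 2, 4, 3, 5], [19, 13, 18, 12, 7, 6, 21, 15, 23, 17, 9, 11, 20, 14, 22, 16, 8, 10, 1, 0, 3, 5, 2, 4], [20, 14, 22, 16, 8, 10, 18, 12, 19, 13, 6, 7, 23, 17, 21, 15, 11, 9, 2, 4, 0, 1, 5, 3], [21, 15, 23, 17, 9, 11, 19, 13, 18, 12, 7, 6, 22, 16, 20, 14, 10, 8, 3, 5, 1, 0, 4, 2], [22, 16, 20, 14, 10, 8, 23, 17, 21, 15, 11, 9, 18, 12, 19, 13, 6, 7, 4, 2, 5, 3, 0, 1], [23, 17, 21, 15, 11, 9, 22, 16, 20, 14, 10, 8, 19, 13, 18, 12, 7, 6, 5, 3, 4, 2, 1, 0]]"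

text \<open>The element of Z S4 with coordinate vector x, the product of coordinate vectors
  ((x y)_k = sum_i x_i y_j with p_j = p_i^-1 p_k), the unit, and the vector of L_j.\<close>

definition vec :: "int list \<Rightarrow> zs4" where
  "vec x = (\<lambda>s. \<Sum>i<24. if s = S4_elt i then x ! i else 0)"

definition vmul :: "int list \<Rightarrow> int list \<Rightarrow> int list" where
  "vmul x y = map (\<lambda>col. sum_list (map2 (\<lambda>a j. a * y ! j) x col)) quot_table"

definition vone :: "int list" where
  "vone = 1 # replicate 23 0"

definition jm_vec :: "nat \<Rightarrow> int list" where
  "jm_vec j = map (\<lambda>i. \<Sum>k\<leftarrow>[1..<j]. if S4_lists ! i = map (transpose k j) [1,2,3,4] then 1 else 0) [0..<24]"

lemma S4_lists_facts:
  "length S4_lists = 24 \<and> distinct S4_lists \<and> list_all (\<lambda>a. length a = 4 \<and> set a = {1..4}) S4_lists"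
  by code_simp

lemma quot_table_facts:
  "list_all2 (\<lambda>c col. list_all2 (\<lambda>a j. j < 24 \<and> list_comp a (S4_lists ! j) = c) S4_lists col)
     S4_lists quot_table"
  by code_simp

lemma quot_table_entry:
  assumes "k < 24" "i < 24"
  shows "length quot_table = 24" "length (quot_table ! k) = 24" "quot_table ! k ! i < 24"
    and "list_comp (S4_lists ! i) (S4_lists ! (quot_table ! k ! i)) = S4_lists ! k"
proof -
  have "length S4_lists = 24" using S4_lists_facts by simp
  then show "length quot_table = 24" "length (quot_table ! k) = 24" "quot_table ! k ! i < 24"
    "list_comp (S4_lists ! i) (S4_lists ! (quot_table ! k ! i)) = S4_lists ! k"
    using quot_table_facts assms by (auto simp: list_all2_conv_all_nth)
qed

lemma S4_lists_nth: "i < 24 \<Longrightarrow> length (S4_lists ! i) = 4 \<and> set (S4_lists ! i) = {1..4}"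
  using S4_lists_facts by (auto simp: list_all_iff)

lemma length4_cases: "length a = 4 \<Longrightarrow> \<exists>w x y z. a = [w,x,y,z]"
  by (cases a; cases "tl a"; cases "tl (tl a)"; cases "tl (tl (tl a))"; auto)

lemma map_list_perm: "length a = 4 \<Longrightarrow> map (list_perm a) [1,2,3,4] = a"
  using length4_cases[of a] by (auto simp: list_perm_def)

lemma list_perm_permutes:
  assumes "length a = 4" "set a = {1..4}" shows "list_perm a permutes {1..4}"
proof -
  have "{1..4::nat} = set [1,2,3,4]" by auto
  then have image: "list_perm a ` {1..4} = set a"
    by (metis list.set_map map_list_perm[OF assms(1)])
  then have "inj_on (list_perm a) {1..4}" using assms(2) by (intro eq_card_imp_inj_on) auto
  then have "bij_betw (list_perm a) {1..4} {1..4}" using image assms(2) by (simp add: bij_betw_def)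
  then show ?thesis by (rule bij_imp_permutes) (auto simp: list_perm_def)
qed

lemma list_perm_comp:
  assumes "length b = 4" "set b \<subseteq> {1..4}"
  shows "list_perm a \<circ> list_perm b = list_perm (list_comp a b)"
proof
  fix n show "(list_perm a \<circ> list_perm b) n = list_perm (list_comp a b) n"
  proof (cases "n \<in> {1..4}")
    case True
    then have "b ! (n - 1) \<in> set b" using assms(1) by auto
    then have "b ! (n - 1) \<in> {1..4}" using assms(2) by blast
    moreover have "n - 1 < length b" using True assms(1) by auto
    ultimately show ?thesis using True by (simp add: list_perm_def list_comp_def)
  next
    case False
    then have "list_perm f n = n" for f unfolding list_perm_def by (simp only: if_False)
    then show ?thesis by simp
  qed
qed

lemma S4_elt_in_S4: "i < 24 \<Longrightarrow> S4_elt i \<in> S4"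
  unfolding S4_def S4_elt_def using list_perm_permutes S4_lists_nth by auto

lemma S4_elt_inj: "inj_on S4_elt {..<24}"
proof (rule inj_onI)
  fix i k assume ik: "i \<in> {..<24}" "k \<in> {..<24}" and "S4_elt i = S4_elt k"
  then have "S4_lists ! i = S4_lists ! k"
    using map_list_perm S4_lists_nth by (metis S4_elt_def lessThan_iff)
  then show "i = k" using S4_lists_facts ik by (simp add: nth_eq_iff_index_eq)
qed

lemma S4_enumeration: "S4 = S4_elt ` {..<24}"
proof -
  have "card (S4_elt ` {..<24}) = 24" using S4_elt_inj by (simp add: card_image)
  moreover have "card S4 = 24" unfolding S4_def
    by (subst card_permutations[of "{1..4::nat}" 4]) (auto simp: fact_numeral)
  ultimately show ?thesis using S4_elt_in_S4 S4_finite by (metis card_subset_eq image_subsetI lessThan_iff)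
qed

lemma S4_elt_quot: assumes "i < 24" "k < 24"
  shows "inv (S4_elt i) \<circ> S4_elt k = S4_elt (quot_table ! k ! i)"
proof -
  have "S4_elt i \<circ> S4_elt (quot_table ! k ! i) = S4_elt k"
    using quot_table_entry[OF assms(2,1)] list_perm_comp S4_lists_nth by (simp add: S4_elt_def)
  then show ?thesis using S4_permutes[OF S4_elt_in_S4[OF assms(1)]]
    by (metis o_assoc permutes_inv_o(2) id_o)
qed

lemma vec_at: "k < 24 \<Longrightarrow> vec x (S4_elt k) = x ! k"
proof -
  assume k: "k < 24"
  have "vec x (S4_elt k) = (\<Sum>i<24. if i = k then x ! i else 0)"
    unfolding vec_def by (rule sum.cong) (use k S4_elt_inj in \<open>auto simp: inj_on_eq_iff\<close>)
  then show ?thesis using k by simp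
qed

lemma supported_vec [simp]: "supported (vec x)"
  unfolding supported_def vec_def using S4_elt_in_S4 by (force intro!: sum.neutral)

lemma vec_eqI:
  assumes "supported f" "\<And>k. k < 24 \<Longrightarrow> f (S4_elt k) = x ! k" shows "f = vec x"
proof
  fix s show "f s = vec x s"
  proof (cases "s \<in> S4")
    case True then obtain k where "k < 24" "s = S4_elt k" using S4_enumeration by auto
    then show ?thesis using assms vec_at by simp
  next
    case False then show ?thesis using assms(1) supported_vec unfolding supported_def by metis
  qed
qed

lemma gmul_vec:
  assumes x: "length x = 24" shows "gmul (vec x) (vec y) = vec (vmul x y)"
proof (rule vec_eqI)
  fix k :: nat assume k: "k < 24"
  have "gmul (vec x) (vec y) (S4_elt k) = (\<Sum>t\<in>S4_elt ` {..<24}. vec x t * vec y (inv t \<circ> S4_elt k))"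
    using S4_elt_in_S4[OF k] by (simp add: gmul_def S4_enumeration[symmetric])
  also have "\<dots> = (\<Sum>i<24. vec x (S4_elt i) * vec y (inv (S4_elt i) \<circ> S4_elt k))"
    using S4_elt_inj by (simp add: sum.reindex)
  also have "\<dots> = (\<Sum>i<24. x ! i * y ! (quot_table ! k ! i))"
    by (rule sum.cong) (simp_all add: S4_elt_quot quot_table_entry k vec_at)
  also have "\<dots> = vmul x y ! k"
    using k x quot_table_entry[OF k] by (simp add: vmul_def sum_list_sum_nth atLeast0LessThan)
  finally show "gmul (vec x) (vec y) (S4_elt k) = vmul x y ! k" .
qed simp

fun vpow :: "int list \<Rightarrow> nat \<Rightarrow> int list" where
  "vpow x 0 = vone"
| "vpow x (Suc n) = vmul x (vpow x n)"

lemma S4_elt_0: "S4_elt 0 = id"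
proof
  fix n show "S4_elt 0 n = id n"
  proof (cases "n \<in> {1..4}")
    case True then have "n = 1 \<or> n = 2 \<or> n = 3 \<or> n = 4" by auto
    then show ?thesis by (elim disjE) (simp_all add: S4_elt_def S4_lists_def list_perm_def)
  next
    case False then show ?thesis unfolding S4_elt_def list_perm_def by (simp only: if_False id_apply)
  qed
qed

lemma gone_vec: "gone = vec vone"
proof (rule vec_eqI)
  fix k :: nat assume k: "k < 24"
  have "S4_elt k = id \<longleftrightarrow> k = 0"
    using S4_elt_0 S4_elt_inj k by (metis inj_on_eq_iff lessThan_iff zero_less_numeral)
  then show "gone (S4_elt k) = vone ! k" using k
    by (cases k) (auto simp: gone_def gbasis_def vone_def)
qed simp

lemma length_vmul: "length (vmul x y) = 24"
  using quot_table_entry(1)[of 0 0] by (simp add: vmul_def)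

lemma length_vpow: "length (vpow x n) = 24"
  by (cases n) (simp_all add: vone_def length_vmul)

lemma gpow_vec: "length x = 24 \<Longrightarrow> gpow (vec x) n = vec (vpow x n)"
  by (induction n) (simp_all add: gone_vec gmul_vec)

lemma length_jm_vec: "length (jm_vec j) = 24"
  by (simp add: jm_vec_def)

lemma list_perm_transpose:
  assumes "k \<in> {1..4}" "j \<in> {1..4}"
  shows "list_perm (map (transpose k j) [1,2,3,4]) = transpose k j"
proof
  fix n show "list_perm (map (transpose k j) [1,2,3,4]) n = transpose k j n"
  proof (cases "n \<in> {1..4}")
    case True then have "n = 1 \<or> n = 2 \<or> n = 3 \<or> n = 4" by auto
    then show ?thesis by (elim disjE) (simp_all add: list_perm_def)
  next
    case False then have "n \<noteq> k" "n \<noteq> j" using assms by auto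
    moreover have "list_perm (map (transpose k j) [1,2,3,4]) n = n"
      unfolding list_perm_def using False by (simp only: if_False)
    ultimately show ?thesis by (simp add: transpose_def)
  qed
qed

lemma JM_vec: assumes j: "j \<in> {1..4}" shows "JM j = vec (jm_vec j)"
proof (rule vec_eqI)
  have "transpose k j \<in> S4" if "k \<in> {1..<j}" for k
    using j that unfolding S4_def by (auto intro!: permutes_swap_id)
  then show "supported (JM j)" unfolding supported_def JM_def gbasis_def
    by (force intro!: sum.neutral)
  fix i :: nat assume i: "i < 24"
  have "S4_elt i = transpose k j \<longleftrightarrow> S4_lists ! i = map (transpose k j) [1,2,3,4]"
    if "k \<in> {1..<j}" for k
    using map_list_perm[of "S4_lists ! i"] S4_lists_nth[OF i] list_perm_transpose[of k j] that j
    by (auto simp: S4_elt_def)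
  then have "JM j (S4_elt i) = (\<Sum>k\<in>{1..<j}. if S4_lists ! i = map (transpose k j) [1,2,3,4] then 1 else 0)"
    unfolding JM_def gbasis_def by (intro sum.cong) simp_all
  also have "\<dots> = jm_vec j ! i" using i
    by (simp add: jm_vec_def sum_set_upt_conv_sum_list_nat[symmetric])
  finally show "JM j (S4_elt i) = jm_vec j ! i" .
qed

text \<open>Computable recurrence certificates: satisfies_recurrence cs x states that
  x^(d+1) = sum_{l<d} cs!l x^(l+1), where d = length cs, with all powers of x computed once.\<close>

fun vpowers :: "int list \<Rightarrow> int list \<Rightarrow> nat \<Rightarrow> int list list" where
  "vpowers x v 0 = [v]"
| "vpowers x v (Suc n) = v # vpowers x (vmul x v) n"

fun vlincomb :: "int list \<Rightarrow> int list list \<Rightarrow> int list" where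
  "vlincomb (c # cs) (v # vs) = map2 (+) (map ((*) c) v) (vlincomb cs vs)"
| "vlincomb _ _ = replicate 24 0"

definition satisfies_recurrence :: "int list \<Rightarrow> int list \<Rightarrow> bool" where
  "satisfies_recurrence cs x \<longleftrightarrow>
     (let ps = vpowers x vone (length cs + 1) in last ps = vlincomb cs (butlast (tl ps)))"

lemma vpowers_vpow: "vpowers x (vpow x m) n = map (\<lambda>l. vpow x (m + l)) [0..<Suc n]"
proof (induction n arbitrary: m)
  case (Suc n)
  have "vpowers x (vpow x m) (Suc n) = vpow x m # map (\<lambda>l. vpow x (Suc m + l)) [0..<Suc n]"
    by (simp only: vpowers.simps vpow.simps(2)[symmetric] Suc)
  also have "\<dots> = map (\<lambda>l. vpow x (m + l)) [0..<Suc (Suc n)]"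
    by (simp add: upt_conv_Cons map_Suc_upt[symmetric] del: upt_Suc)
  finally show ?case .
qed simp

lemma vlincomb_nth:
  "length cs = length vs \<Longrightarrow> \<forall>v\<in>set vs. length v = 24 \<Longrightarrow>
   vlincomb cs vs = map (\<lambda>k. \<Sum>l<length cs. cs ! l * vs ! l ! k) [0..<24]"
proof (induction cs vs rule: list_induct2)
  case Nil then show ?case by (simp add: map_replicate_const)
next
  case (Cons c cs v vs)
  then show ?case
    by (intro nth_equalityI) (simp_all add: sum.lessThan_Suc_shift del: sum.lessThan_Suc)
qed

lemma vec_sum: "vec (map (\<lambda>k. \<Sum>l\<in>L. c l * v l ! k) [0..<24]) = (\<lambda>s. \<Sum>l\<in>L. c l * vec (v l) s)"
proof (rule sym, rule vec_eqI)
  show "supported (\<lambda>s. \<Sum>l\<in>L. c l * vec (v l) s)"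
    using supported_vec unfolding supported_def by simp
qed (simp add: vec_at)

lemma satisfies_recurrence_gpow:
  assumes "satisfies_recurrence cs x" "length x = 24"
  shows "gpow (vec x) (length cs + 1) = (\<lambda>s. \<Sum>l<length cs. cs ! l * gpow (vec x) (l + 1) s)"
proof -
  define d where "d = length cs"
  have powers: "vpowers x vone (d + 1) = map (vpow x) [0..<Suc (Suc d)]"
    using vpowers_vpow[of x 0 "d + 1"] by simp
  have "butlast [0..<Suc d] = [0..<d]" by simp
  then have "butlast (tl (map (vpow x) [0..<Suc (Suc d)])) = map (\<lambda>l. vpow x (l + 1)) [0..<d]"
    by (simp add: map_tl[symmetric] map_butlast[symmetric] map_Suc_upt[symmetric] comp_def del: upt_Suc)
  then have "vpow x (d + 1) = vlincomb cs (map (\<lambda>l. vpow x (l + 1)) [0..<d])"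
    using assms(1) unfolding satisfies_recurrence_def d_def[symmetric] powers by (simp add: last_map)
  also have "\<dots> = map (\<lambda>k. \<Sum>l<d. cs ! l * vpow x (l + 1) ! k) [0..<24]"
    by (subst vlincomb_nth) (auto simp: length_vpow d_def simp del: vpow.simps)
  finally have "vec (vpow x (d + 1)) = (\<lambda>s. \<Sum>l<d. cs ! l * vec (vpow x (l + 1)) s)"
    by (simp add: vec_sum del: vpow.simps)
  then show ?thesis by (simp only: gpow_vec[OF assms(2)] d_def)
qed

text \<open>Index pairs a < b and triples a < b < c, and the coordinate vectors of L_a L_b and
  L_a L_b L_c.  Patterns rather than lambdas keep the evaluations below on concrete data.\<close>

definition jm_index_pairs :: "(nat \<times> nat) list" where
  "jm_index_pairs = [(1,2), (1,3), (1,4), (2,3), (2,4), (3,4)]"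

definition jm_index_triples :: "(nat \<times> nat \<times> nat) list" where
  "jm_index_triples = [(1,2,3), (1,2,4), (1,3,4), (2,3,4)]"

fun jm_pair_vec :: "nat \<times> nat \<Rightarrow> int list" where
  "jm_pair_vec (a, b) = vmul (jm_vec a) (jm_vec b)"

fun jm_triple_vec :: "nat \<times> nat \<times> nat \<Rightarrow> int list" where
  "jm_triple_vec (a, b, c) = vmul (jm_vec a) (jm_pair_vec (b, c))"

text \<open>The certificates, checked by evaluation: the L_a commute, and L_j, L_a L_b and L_a L_b L_c
  are annihilated by x^7 - 14x^5 + 49x^3 - 36x, x^6 - 8x^5 + 5x^4 + 50x^3 - 36x^2 - 72x and
  x^5 - 40x^3 + 144x respectively.\<close>

lemma jm_vec_commute_cert:
  "map jm_pair_vec jm_index_pairs = map (jm_pair_vec \<circ> prod.swap) jm_index_pairs"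
  by code_simp

lemma jm_singles_cert:
  "list_all (satisfies_recurrence [36, 0, -49, 0, 14, 0]) (map jm_vec [1,2,3,4])"
  by code_simp

lemma jm_pairs_cert:
  "list_all (satisfies_recurrence [72, 36, -50, -5, 8]) (map jm_pair_vec jm_index_pairs)"
  by code_simp

lemma jm_triples_cert:
  "list_all (satisfies_recurrence [-144, 0, 40, 0]) (map jm_triple_vec jm_index_triples)"
  by code_simp

definition power_sum :: "int list list \<Rightarrow> nat \<Rightarrow> zs4" where
  "power_sum V n = (\<lambda>s. \<Sum>x\<leftarrow>V. gpow (vec x) n s)"

lemma sum_list_sum_swap: "(\<Sum>x\<leftarrow>V. \<Sum>l\<in>L. f x l) = (\<Sum>l\<in>L. \<Sum>x\<leftarrow>V. f x l)"
  by (induction V) (simp_all add: sum.distrib)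

lemma power_sum_recurrence:
  assumes cert: "list_all (satisfies_recurrence cs) V" and len: "\<forall>x\<in>set V. length x = 24"
  shows "power_sum V (length cs + m + 1) = (\<lambda>s. \<Sum>l<length cs. cs ! l * power_sum V (l + m + 1) s)"
proof -
  have "gpow (vec x) (length cs + m + 1) = (\<lambda>s. \<Sum>l<length cs. cs ! l * gpow (vec x) (l + m + 1) s)"
    if "x \<in> set V" for x
    using cert len that by (intro gpow_recurrence_shift satisfies_recurrence_gpow) (auto simp: list_all_iff)
  then have "power_sum V (length cs + m + 1)
      = (\<lambda>s. \<Sum>x\<leftarrow>V. \<Sum>l<length cs. cs ! l * gpow (vec x) (l + m + 1) s)"
    unfolding power_sum_def by (intro ext arg_cong[where f = sum_list] map_cong) simp_all
  then show ?thesis by (simp add: power_sum_def sum_list_sum_swap sum_list_const_mult)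
qed

text \<open>The exponent vectors of m_mu are the distinct rearrangements of mu padded by zeros, which
  permutations_of_list_impl enumerates without repetition.\<close>

lemma msym_eq_sum_list:
  assumes "length mu \<le> 4"
  shows "msym mu = (\<lambda>s. \<Sum>a\<leftarrow>permutations_of_list_impl (mu @ replicate (4 - length mu) 0). JMmono a s)"
proof -
  define l where "l = mu @ replicate (4 - length mu) 0"
  have "length l = 4" using assms by (simp add: l_def)
  then have "{a. length a = 4 \<and> mset a = mset l} = set (permutations_of_list_impl l)"
    by (auto simp: set_permutations_of_list_impl permutations_of_multiset_def dest: mset_eq_length)
  then show ?thesis using assms
    by (simp add: msym_def l_def[symmetric] sum_list_distinct_conv_sum_set distinct_permutations_of_list_impl)
qed

lemma JMmono_4:
  "JMmono [a, b, c, d]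
    = gmul (gpow (JM 1) a) (gmul (gpow (JM 2) b) (gmul (gpow (JM 3) c) (gpow (JM 4) d)))"
proof -
  have "[0..<4] = [0::nat, 1, 2, 3]" by (simp add: upt_rec)
  then show ?thesis by (simp add: JMmono_def eval_nat_numeral gmul_gone_right)
qed

lemma JM_commute:
  assumes "(a, b) \<in> set jm_index_pairs" shows "gmul (JM a) (JM b) = gmul (JM b) (JM a)"
proof -
  have "jm_pair_vec (a, b) = jm_pair_vec (b, a)"
    using jm_vec_commute_cert assms by (auto simp: map_eq_conv)
  moreover have "a \<in> {1..4}" "b \<in> {1..4}" using assms by (auto simp: jm_index_pairs_def)
  ultimately show ?thesis by (simp add: JM_vec gmul_vec length_jm_vec)
qed

lemma JM_pair_vec:
  assumes "(a, b) \<in> set jm_index_pairs" shows "gmul (JM a) (JM b) = vec (jm_pair_vec (a, b))"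
proof -
  have "a \<in> {1..4}" "b \<in> {1..4}" using assms by (auto simp: jm_index_pairs_def)
  then show ?thesis by (simp add: JM_vec gmul_vec length_jm_vec)
qed

lemma supported_JM: "j \<in> {1..4} \<Longrightarrow> supported (JM j)"
  by (simp add: JM_vec)

lemma gpow_JM_pair:
  assumes "(a, b) \<in> set jm_index_pairs"
  shows "gmul (gpow (JM a) n) (gpow (JM b) n) = gpow (vec (jm_pair_vec (a, b))) n"
proof -
  have "b \<in> {1..4}" using assms by (auto simp: jm_index_pairs_def)
  then show ?thesis unfolding JM_pair_vec[OF assms, symmetric]
    by (intro gpow_gmul_commuting JM_commute assms supported_JM)
qed

lemma gpow_JM_triple:
  assumes ab: "(a, b) \<in> set jm_index_pairs" and ac: "(a, c) \<in> set jm_index_pairs"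
    and bc: "(b, c) \<in> set jm_index_pairs"
  shows "gmul (gpow (JM a) n) (gmul (gpow (JM b) n) (gpow (JM c) n))
    = gpow (vec (jm_triple_vec (a, b, c))) n"
proof -
  have indices: "a \<in> {1..4}" "c \<in> {1..4}" using ab bc by (auto simp: jm_index_pairs_def)
  have "gmul (gpow (JM a) n) (gmul (gpow (JM b) n) (gpow (JM c) n))
      = gmul (gpow (JM a) n) (gpow (gmul (JM b) (JM c)) n)"
    by (simp only: gpow_gmul_commuting[OF JM_commute[OF bc] supported_JM[OF indices(2)]])
  also have "\<dots> = gpow (gmul (JM a) (gmul (JM b) (JM c))) n"
  proof (rule gpow_gmul_commuting)
    show "gmul (JM a) (gmul (JM b) (JM c)) = gmul (gmul (JM b) (JM c)) (JM a)"
      using ab ac by (intro gmul_commute_gmul JM_commute)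
  qed simp
  also have "gmul (JM a) (gmul (JM b) (JM c)) = vec (jm_triple_vec (a, b, c))"
    using indices(1) by (simp add: JM_pair_vec[OF bc] JM_vec gmul_vec length_jm_vec)
  finally show ?thesis .
qed

lemma exponent_rearrangements:
  assumes "i \<noteq> 0"
  shows "permutations_of_list_impl [i,0,0,0] = [[i,0,0,0], [0,i,0,0], [0,0,i,0], [0,0,0,i]]"
    and "permutations_of_list_impl [i,i,0,0]
           = [[i,i,0,0], [i,0,i,0], [i,0,0,i], [0,i,i,0], [0,i,0,i], [0,0,i,i]]"
    and "permutations_of_list_impl [i,i,i,0] = [[i,i,i,0], [i,i,0,i], [i,0,i,i], [0,i,i,i]]"
  using assms by (simp_all add: permutations_of_list_impl_nonempty)

lemma msym_single: assumes "i \<noteq> 0" shows "msym [i] = power_sum (map jm_vec [1, 2, 3, 4]) i"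
proof -
  have "msym [i] = (\<lambda>s. \<Sum>a\<leftarrow>permutations_of_list_impl [i,0,0,0]. JMmono a s)"
    using msym_eq_sum_list[of "[i]"] by (simp add: numeral_eq_Suc)
  then show ?thesis
    using assms by (simp add: exponent_rearrangements JMmono_4 gmul_gone_left gmul_gone_right
      power_sum_def JM_vec)
qed

lemma msym_pair: assumes "i \<noteq> 0" shows "msym [i, i] = power_sum (map jm_pair_vec jm_index_pairs) i"
proof -
  have "msym [i, i] = (\<lambda>s. \<Sum>a\<leftarrow>permutations_of_list_impl [i,i,0,0]. JMmono a s)"
    using msym_eq_sum_list[of "[i, i]"] by (simp add: numeral_eq_Suc)
  then show ?thesis
    using assms by (simp add: exponent_rearrangements JMmono_4 gmul_gone_left gmul_gone_right
      power_sum_def gpow_JM_pair jm_index_pairs_def del: jm_pair_vec.simps)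
qed

lemma msym_triple:
  assumes "i \<noteq> 0" shows "msym [i, i, i] = power_sum (map jm_triple_vec jm_index_triples) i"
proof -
  have "msym [i, i, i] = (\<lambda>s. \<Sum>a\<leftarrow>permutations_of_list_impl [i,i,i,0]. JMmono a s)"
    using msym_eq_sum_list[of "[i, i, i]"] by (simp add: numeral_eq_Suc)
  then show ?thesis
    using assms by (simp add: exponent_rearrangements JMmono_4 gmul_gone_left gmul_gone_right
      power_sum_def gpow_JM_triple jm_index_triples_def jm_index_pairs_def
      del: jm_pair_vec.simps jm_triple_vec.simps)
qed

lemma length_jm_lists:
  "\<forall>x\<in>set (map jm_vec [1, 2, 3, 4]). length x = 24"
  "\<forall>x\<in>set (map jm_pair_vec jm_index_pairs). length x = 24"
  "\<forall>x\<in>set (map jm_triple_vec jm_index_triples). length x = 24"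
  by (auto simp: length_jm_vec length_vmul jm_index_pairs_def jm_index_triples_def)

lemma msym_single_recurrence:
  assumes "i \<ge> 7"
  shows "msym [i] = (\<lambda>s. 14 * msym [i-2] s - 49 * msym [i-4] s + 36 * msym [i-6] s)"
proof -
  obtain m where i: "i = m + 7" using assms by (metis add.commute le_iff_add)
  let ?P = "power_sum (map jm_vec [1, 2, 3, 4])"
  have "?P (m + 7) = (\<lambda>s. 14 * ?P (m + 5) s - 49 * ?P (m + 3) s + 36 * ?P (m + 1) s)"
    using power_sum_recurrence[OF jm_singles_cert length_jm_lists(1), of m]
    by (simp add: eval_nat_numeral algebra_simps del: power_sum_def)
  then show ?thesis unfolding i by (simp add: msym_single add.commute del: power_sum_def)
qed

lemma msym_pair_recurrence:
  assumes "i \<ge> 6"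
  shows "msym [i,i] = (\<lambda>s. 8 * msym [i-1,i-1] s - 5 * msym [i-2,i-2] s - 50 * msym [i-3,i-3] s
                             + 36 * msym [i-4,i-4] s + 72 * msym [i-5,i-5] s)"
proof -
  obtain m where i: "i = m + 6" using assms by (metis add.commute le_iff_add)
  let ?P = "power_sum (map jm_pair_vec jm_index_pairs)"
  have "?P (m + 6) = (\<lambda>s. 8 * ?P (m + 5) s - 5 * ?P (m + 4) s - 50 * ?P (m + 3) s
                          + 36 * ?P (m + 2) s + 72 * ?P (m + 1) s)"
    using power_sum_recurrence[OF jm_pairs_cert length_jm_lists(2), of m]
    by (simp add: eval_nat_numeral algebra_simps del: power_sum_def jm_pair_vec.simps)
  then show ?thesis unfolding i by (simp add: msym_pair add.commute del: power_sum_def jm_pair_vec.simps)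
qed

lemma msym_triple_recurrence:
  assumes "i \<ge> 5"
  shows "msym [i,i,i] = (\<lambda>s. 40 * msym [i-2,i-2,i-2] s - 144 * msym [i-4,i-4,i-4] s)"
proof -
  obtain m where i: "i = m + 5" using assms by (metis add.commute le_iff_add)
  let ?P = "power_sum (map jm_triple_vec jm_index_triples)"
  have "?P (m + 5) = (\<lambda>s. 40 * ?P (m + 3) s - 144 * ?P (m + 1) s)"
    using power_sum_recurrence[OF jm_triples_cert length_jm_lists(3), of m]
    by (simp add: eval_nat_numeral algebra_simps del: power_sum_def jm_triple_vec.simps)
  then show ?thesis unfolding i by (simp add: msym_triple add.commute del: power_sum_def jm_triple_vec.simps)
qed

theorem lemma2p2:
  shows "(\<forall>i::nat. i \<ge> 7 \<longrightarrow>
           msym [i] = (\<lambda>s. 14 * msym [i-2] s - 49 * msym [i-4] s + 36 * msym [i-6] s))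
    \<and> (\<forall>i::nat. i \<ge> 6 \<longrightarrow>
           msym [i,i] = (\<lambda>s. 8 * msym [i-1,i-1] s - 5 * msym [i-2,i-2] s - 50 * msym [i-3,i-3] s
                             + 36 * msym [i-4,i-4] s + 72 * msym [i-5,i-5] s))
    \<and> (\<forall>i::nat. i \<ge> 5 \<longrightarrow>
           msym [i,i,i] = (\<lambda>s. 40 * msym [i-2,i-2,i-2] s - 144 * msym [i-4,i-4,i-4] s))"
  using msym_single_recurrence msym_pair_recurrence msym_triple_recurrence by blast

end
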